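(* Let $(\mathfrak{A},\mathfrak{A}_0)$ be a $*$-semisimple Banach quasi $*$-algebra such that $\mathfrak{A}[\tau_w]$ is sequentially complete. Let $\delta$ be a closable qu*-derivation of $(\mathfrak{A},\mathfrak{A}_0)$ with closure $\overline{\delta}$. If $a,b\in\mathcal{D}(\overline{\delta})$ and $a\,\square\, b$ is well defined, then there exists an element $\overline{\delta}_w(a\,\square\, b)\in\mathfrak{A}$ such that $$\varphi(\overline{\delta}_w(a\,\square\, b)u,v)=\varphi(bu,\overline{\delta}(a)^*v)+\varphi(\overline{\delta}(b)u,a^*v)$$ for all $u,v\in\mathfrak{A}_0$ and all $\varphi\in\mathcal{S}_{\mathfrak{A}_0}(\mathfrak{A})$.
   Context: A quasi $*$-algebra $(\mathfrak{A},\mathfrak{A}_0)$ consists of a vector space $\mathfrak{A}$ and a $*$-algebra $\mathfrak{A}_0\subseteq\mathfrak{A}$ such that $\mathfrak{A}$ carries an involution extending that of $\mathfrak{A}_0$, $\mathfrak{A}$ is an $\mathfrak{A}_0$-bimodule whose module multiplications extend the multiplication of $\mathfrak{A}_0$ with $(xa)y=x(ay)$, $a(xy)=(ax)y$ for $a\in\mathfrak{A}$, $x,y\in\mathfrak{A}_0$, and $(ax)^*=x^*a^*$. It is a Banach quasi $*$-algebra if $\mathfrak{A}$ is a Banach space with norm $\|\cdot\|$ such that $\|a^*\|=\|a\|$, $\mathfrak{A}_0$ is dense in $\mathfrak{A}$, and for each $x\in\mathfrak{A}_0$ the map $a\mapsto ax$ is continuous on $\mathfrak{A}$. Let $\mathcal{S}_{\mathfrak{A}_0}(\mathfrak{A})$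 be the set of sesquilinear forms $\varphi$ on $\mathfrak{A}\times\mathfrak{A}$ with $\varphi(a,a)\ge 0$, $\varphi(ax,y)=\varphi(x,a^*y)$ for $a\in\mathfrak{A}$, $x,y\in\mathfrak{A}_0$, and $|\varphi(a,b)|\le\|a\|\|b\|$ for all $a,b\in\mathfrak{A}$. The Banach quasi $*$-algebra is $*$-semisimple if $\varphi(a,a)=0$ for all $\varphi\in\mathcal{S}_{\mathfrak{A}_0}(\mathfrak{A})$ implies $a=0$. The topology $\tau_w$ on $\mathfrak{A}$ is generated by the seminorms $a\mapsto|\varphi(ax,y)|$, $\varphi\in\mathcal{S}_{\mathfrak{A}_0}(\mathfrak{A})$, $x,y\in\mathfrak{A}_0$. For $a,b\in\mathfrak{A}$ the weak product $a\,\square\, b$ is well defined if there is a (necessarily unique) $c\in\mathfrak{A}$ with $\varphi(bx,a^*y)=\varphi(cx,y)$ for all $x,y\in\mathfrak{A}_0$, $\varphi\in\mathcal{S}_{\mathfrak{A}_0}(\mathfrak{A})$; then $a\,\square\, b:=c$. A qu*-derivation is a linear map $\delta:\mathfrak{A}_0\to\mathfrak{A}$ with $\delta(x^* )=\delta(x)^*$ and $\delta(xy)=\delta(x)y+x\delta(y)$ for $x,y\in\mathfrak{A}_0$. It is closable if it is closable as a linear map from $\mathfrak{A}_0\subseteq\mathfrak{A}$ (norm of $\mathfrak{A}$) into $\mathfrak{A}$; its closure $\overline{\delta}$ has domain $\mathcal{D}(\overline{\delta})$ consisting of those $a\in\mathfrak{A}$ for which there exist $\{x_n\}\subset\mathfrak{A}_0$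 and $w\in\mathfrak{A}$ with $\|x_n-a\|\to0$ and $\|\delta(x_n)-w\|\to 0$, and $\overline{\delta}(a):=w$. *)

theory Defs
  imports "HOL-Analysis.Analysis"
begin

text \<open>The underlying space is a real Banach space 'a together with a complex
scalar multiplication smul extending the real one, i.e. a complex Banach space.\<close>

definition complex_scalar :: "(complex \<Rightarrow> 'a::banach \<Rightarrow> 'a) \<Rightarrow> bool" where
  "complex_scalar smul \<longleftrightarrow>
     (\<forall>r a. smul (complex_of_real r) a = r *\<^sub>R a) \<and>
     (\<forall>c d a. smul c (smul d a) = smul (c * d) a) \<and>
     (\<forall>c a b. smul c (a + b) = smul c a + smul c b) \<and>
     (\<forall>c d a. smul (c + d) a = smul c a + smul d a) \<and>
     (\<forall>c a. norm (smul c a) = cmod c * norm a)"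

text \<open>Quasi *-algebra (A, A0): A is the whole type, A0 a subset; mul a x and
mul x a are the module multiplications (only relevant when one factor lies in A0);
invl is the involution.\<close>

definition quasi_star_algebra ::
  "'a::banach set \<Rightarrow> (complex \<Rightarrow> 'a \<Rightarrow> 'a) \<Rightarrow> ('a \<Rightarrow> 'a \<Rightarrow> 'a) \<Rightarrow> ('a \<Rightarrow> 'a) \<Rightarrow> bool" where
  "quasi_star_algebra A0 smul mul invl \<longleftrightarrow>
     complex_scalar smul \<and>
     0 \<in> A0 \<and> (\<forall>x\<in>A0. \<forall>y\<in>A0. x + y \<in> A0) \<and> (\<forall>c. \<forall>x\<in>A0. smul c x \<in> A0) \<and>
     (\<forall>x\<in>A0. \<forall>y\<in>A0. mul x y \<in> A0) \<and> (\<forall>x\<in>A0. invl x \<in> A0) \<and>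
     (\<forall>a. invl (invl a) = a) \<and> (\<forall>a b. invl (a + b) = invl a + invl b) \<and>
     (\<forall>c a. invl (smul c a) = smul (cnj c) (invl a)) \<and>
     (\<forall>x\<in>A0. \<forall>a b. mul (a + b) x = mul a x + mul b x \<and> mul x (a + b) = mul x a + mul x b) \<and>
     (\<forall>x\<in>A0. \<forall>c a. mul (smul c a) x = smul c (mul a x) \<and> mul x (smul c a) = smul c (mul x a)) \<and>
     (\<forall>x\<in>A0. \<forall>y\<in>A0. \<forall>a. mul a (x + y) = mul a x + mul a y \<and> mul (x + y) a = mul x a + mul y a) \<and>
     (\<forall>x\<in>A0. \<forall>c a. mul a (smul c x) = smul c (mul a x) \<and> mul (smul c x) a = smul c (mul x a)) \<and>
     (\<forall>x\<in>A0. \<forall>y\<in>A0. \<forall>a.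
        mul (mul x a) y = mul x (mul a y) \<and>
        mul a (mul x y) = mul (mul a x) y \<and>
        mul (mul x y) a = mul x (mul y a)) \<and>
     (\<forall>x\<in>A0. \<forall>a. invl (mul a x) = mul (invl x) (invl a))"

definition banach_quasi_star_algebra ::
  "'a::banach set \<Rightarrow> (complex \<Rightarrow> 'a \<Rightarrow> 'a) \<Rightarrow> ('a \<Rightarrow> 'a \<Rightarrow> 'a) \<Rightarrow> ('a \<Rightarrow> 'a) \<Rightarrow> bool" where
  "banach_quasi_star_algebra A0 smul mul invl \<longleftrightarrow>
     quasi_star_algebra A0 smul mul invl \<and>
     (\<forall>a. norm (invl a) = norm a) \<and>
     closure A0 = UNIV \<and>
     (\<forall>x\<in>A0. continuous_on UNIV (\<lambda>a. mul a x))"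

definition sesquilinear :: "(complex \<Rightarrow> 'a::banach \<Rightarrow> 'a) \<Rightarrow> ('a \<Rightarrow> 'a \<Rightarrow> complex) \<Rightarrow> bool" where
  "sesquilinear smul \<phi> \<longleftrightarrow>
     (\<forall>a b d. \<phi> (a + b) d = \<phi> a d + \<phi> b d) \<and>
     (\<forall>c a b. \<phi> (smul c a) b = c * \<phi> a b) \<and>
     (\<forall>a b d. \<phi> a (b + d) = \<phi> a b + \<phi> a d) \<and>
     (\<forall>c a b. \<phi> a (smul c b) = cnj c * \<phi> a b)"

definition S_forms ::
  "'a::banach set \<Rightarrow> (complex \<Rightarrow> 'a \<Rightarrow> 'a) \<Rightarrow> ('a \<Rightarrow> 'a \<Rightarrow> 'a) \<Rightarrow> ('a \<Rightarrow> 'a) \<Rightarrow> ('a \<Rightarrow> 'a \<Rightarrow> complex) set" where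
  "S_forms A0 smul mul invl = {\<phi>. sesquilinear smul \<phi> \<and>
     (\<forall>a. \<phi> a a \<in> \<real> \<and> 0 \<le> Re (\<phi> a a)) \<and>
     (\<forall>a. \<forall>x\<in>A0. \<forall>y\<in>A0. \<phi> (mul a x) y = \<phi> x (mul (invl a) y)) \<and>
     (\<forall>a b. cmod (\<phi> a b) \<le> norm a * norm b)}"

definition star_semisimple ::
  "'a::banach set \<Rightarrow> (complex \<Rightarrow> 'a \<Rightarrow> 'a) \<Rightarrow> ('a \<Rightarrow> 'a \<Rightarrow> 'a) \<Rightarrow> ('a \<Rightarrow> 'a) \<Rightarrow> bool" where
  "star_semisimple A0 smul mul invl \<longleftrightarrow>
     (\<forall>a. (\<forall>\<phi>\<in>S_forms A0 smul mul invl. \<phi> a a = 0) \<longrightarrow> a = 0)"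

text \<open>Sequential completeness of A with respect to the locally convex topology tau_w
generated by the seminorms a \<mapsto> |phi(a x, y)|.\<close>

definition tau_w_seq_complete ::
  "'a::banach set \<Rightarrow> (complex \<Rightarrow> 'a \<Rightarrow> 'a) \<Rightarrow> ('a \<Rightarrow> 'a \<Rightarrow> 'a) \<Rightarrow> ('a \<Rightarrow> 'a) \<Rightarrow> bool" where
  "tau_w_seq_complete A0 smul mul invl \<longleftrightarrow>
     (\<forall>s :: nat \<Rightarrow> 'a.
        (\<forall>\<phi>\<in>S_forms A0 smul mul invl. \<forall>x\<in>A0. \<forall>y\<in>A0. \<forall>e>0. \<exists>N. \<forall>m\<ge>N. \<forall>n\<ge>N.
            cmod (\<phi> (mul (s m - s n) x) y) < e)
        \<longrightarrow> (\<exists>a. \<forall>\<phi>\<in>S_forms A0 smul mul invl. \<forall>x\<in>A0. \<forall>y\<in>A0.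
               (\<lambda>n. cmod (\<phi> (mul (s n - a) x) y)) \<longlonglongrightarrow> 0))"

definition weak_prod_defined ::
  "'a::banach set \<Rightarrow> (complex \<Rightarrow> 'a \<Rightarrow> 'a) \<Rightarrow> ('a \<Rightarrow> 'a \<Rightarrow> 'a) \<Rightarrow> ('a \<Rightarrow> 'a) \<Rightarrow> 'a \<Rightarrow> 'a \<Rightarrow> bool" where
  "weak_prod_defined A0 smul mul invl a b \<longleftrightarrow>
     (\<exists>c. \<forall>\<phi>\<in>S_forms A0 smul mul invl. \<forall>x\<in>A0. \<forall>y\<in>A0.
          \<phi> (mul b x) (mul (invl a) y) = \<phi> (mul c x) y)"

definition qu_derivation ::
  "'a::banach set \<Rightarrow> (complex \<Rightarrow> 'a \<Rightarrow> 'a) \<Rightarrow> ('a \<Rightarrow> 'a \<Rightarrow> 'a) \<Rightarrow> ('a \<Rightarrow> 'a) \<Rightarrow> ('a \<Rightarrow> 'a) \<Rightarrow> bool" where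
  "qu_derivation A0 smul mul invl \<delta> \<longleftrightarrow>
     (\<forall>x\<in>A0. \<forall>y\<in>A0. \<delta> (x + y) = \<delta> x + \<delta> y) \<and>
     (\<forall>c. \<forall>x\<in>A0. \<delta> (smul c x) = smul c (\<delta> x)) \<and>
     (\<forall>x\<in>A0. \<delta> (invl x) = invl (\<delta> x)) \<and>
     (\<forall>x\<in>A0. \<forall>y\<in>A0. \<delta> (mul x y) = mul (\<delta> x) y + mul x (\<delta> y))"

definition in_closed_graph :: "'a::banach set \<Rightarrow> ('a \<Rightarrow> 'a) \<Rightarrow> 'a \<Rightarrow> 'a \<Rightarrow> bool" where
  "in_closed_graph A0 \<delta> a w \<longleftrightarrow>
     (\<exists>xs :: nat \<Rightarrow> 'a. (\<forall>n. xs n \<in> A0) \<and> xs \<longlonglongrightarrow> a \<and> (\<lambda>n. \<delta> (xs n)) \<longlonglongrightarrow> w)"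

definition closable :: "'a::banach set \<Rightarrow> ('a \<Rightarrow> 'a) \<Rightarrow> bool" where
  "closable A0 \<delta> \<longleftrightarrow> (\<forall>w. in_closed_graph A0 \<delta> 0 w \<longrightarrow> w = 0)"

definition closure_dom :: "'a::banach set \<Rightarrow> ('a \<Rightarrow> 'a) \<Rightarrow> 'a set" where
  "closure_dom A0 \<delta> = {a. \<exists>w. in_closed_graph A0 \<delta> a w}"

definition closure_op :: "'a::banach set \<Rightarrow> ('a \<Rightarrow> 'a) \<Rightarrow> 'a \<Rightarrow> 'a" where
  "closure_op A0 \<delta> a = (THE w. in_closed_graph A0 \<delta> a w)"

end

theory Submission
  imports Defs
begin

text \<open>Approximate a and b in the graph norm by sequences x n, y n in A0. By the
Leibniz rule and the adjoint property of the forms in S,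
  phi(delta(x n y n) u, v) = phi(y n u, delta(x n)* v) + phi(delta(y n) u, (x n)* v),
and the right-hand side converges to the claimed expression. Hence delta(x n y n) is
tau_w-Cauchy, and its tau_w-limit is the required element.\<close>

lemma additive_diff:
  fixes f :: "'a::ab_group_add \<Rightarrow> 'b::ab_group_add"
  assumes "\<And>p q. f (p + q) = f p + f q"
  shows "f (p - q) = f p - f q"
  using assms[of "p - q" q] by (simp add: eq_diff_eq)

locale quasi_star =
  fixes A0 :: "'a::banach set"
    and smul :: "complex \<Rightarrow> 'a \<Rightarrow> 'a"
    and mul :: "'a \<Rightarrow> 'a \<Rightarrow> 'a"
    and invl :: "'a \<Rightarrow> 'a"
  assumes quasi_star_algebra: "quasi_star_algebra A0 smul mul invl"
begin

abbreviation forms :: "('a \<Rightarrow> 'a \<Rightarrow> complex) set" where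
  "forms \<equiv> S_forms A0 smul mul invl"

lemma
  shows complex_scalar: "complex_scalar smul"
    and add_mem: "x \<in> A0 \<Longrightarrow> y \<in> A0 \<Longrightarrow> x + y \<in> A0"
    and smul_mem: "x \<in> A0 \<Longrightarrow> smul c x \<in> A0"
    and mul_mem: "x \<in> A0 \<Longrightarrow> y \<in> A0 \<Longrightarrow> mul x y \<in> A0"
    and invl_mem: "x \<in> A0 \<Longrightarrow> invl x \<in> A0"
    and invl_invl: "invl (invl a) = a"
    and invl_add: "invl (a + b) = invl a + invl b"
    and invl_smul: "invl (smul c a) = smul (cnj c) (invl a)"
    and mul_add_left: "x \<in> A0 \<Longrightarrow> mul (a + b) x = mul a x + mul b x"
    and mul_assoc_middle: "x \<in> A0 \<Longrightarrow> y \<in> A0 \<Longrightarrow> mul (mul x a) y = mul x (mul a y)"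
    and mul_assoc_right: "x \<in> A0 \<Longrightarrow> y \<in> A0 \<Longrightarrow> mul a (mul x y) = mul (mul a x) y"
    and invl_mul: "x \<in> A0 \<Longrightarrow> invl (mul a x) = mul (invl x) (invl a)"
  using quasi_star_algebra unfolding quasi_star_algebra_def by simp_all

lemma scaleR_eq_smul: "r *\<^sub>R a = smul (complex_of_real r) a"
  using complex_scalar unfolding complex_scalar_def by simp

lemma smul_minus_one: "smul (-1) a = - a"
  by (metis scaleR_eq_smul of_real_1 of_real_minus scaleR_minus1_left)

lemma mul_diff_left: "x \<in> A0 \<Longrightarrow> mul (a - b) x = mul a x - mul b x"
  by (rule additive_diff) (rule mul_add_left)

lemma mul_left_eq_invl: "x \<in> A0 \<Longrightarrow> mul x a = invl (mul (invl a) (invl x))"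
  by (simp add: invl_mul invl_mem invl_invl)

lemma S_forms_bounded_bilinear:
  assumes "\<phi> \<in> forms"
  shows "bounded_bilinear \<phi>"
proof -
  have sl: "sesquilinear smul \<phi>" using assms unfolding S_forms_def by blast
  show ?thesis
  proof
    show "\<phi> (a + a') b = \<phi> a b + \<phi> a' b" for a a' b using sl unfolding sesquilinear_def by blast
    show "\<phi> a (b + b') = \<phi> a b + \<phi> a b'" for a b b' using sl unfolding sesquilinear_def by blast
    show "\<phi> (r *\<^sub>R a) b = r *\<^sub>R \<phi> a b" for r a b
      using sl unfolding sesquilinear_def scaleR_eq_smul by (simp add: scaleR_conv_of_real)
    show "\<phi> a (r *\<^sub>R b) = r *\<^sub>R \<phi> a b" for r a b
      using sl unfolding sesquilinear_def scaleR_eq_smul by (simp add: scaleR_conv_of_real)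
    show "\<exists>K. \<forall>a b. norm (\<phi> a b) \<le> norm a * norm b * K"
      using assms unfolding S_forms_def by (intro exI[where x=1]) auto
  qed
qed

lemma S_forms_diff_left: "\<phi> \<in> forms \<Longrightarrow> \<phi> (a - b) c = \<phi> a c - \<phi> b c"
  by (rule bounded_bilinear.diff_left[OF S_forms_bounded_bilinear])

lemma S_forms_mul_adjoint:
  "\<phi> \<in> forms \<Longrightarrow> x \<in> A0 \<Longrightarrow> y \<in> A0 \<Longrightarrow> \<phi> (mul a x) y = \<phi> x (mul (invl a) y)"
  unfolding S_forms_def by blast

lemma closure_op_eqI:
  assumes derivation: "qu_derivation A0 smul mul invl \<delta>" and "closable A0 \<delta>"
    and graph: "in_closed_graph A0 \<delta> a w"
  shows "closure_op A0 \<delta> a = w"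
  unfolding closure_op_def
proof (rule the_equality)
  show "in_closed_graph A0 \<delta> a w" by (rule graph)
next
  fix w'
  assume "in_closed_graph A0 \<delta> a w'"
  then obtain ys where ys: "\<And>n. ys n \<in> A0" "ys \<longlonglongrightarrow> a" "(\<lambda>n. \<delta> (ys n)) \<longlonglongrightarrow> w'"
    unfolding in_closed_graph_def by blast
  obtain xs where xs: "\<And>n. xs n \<in> A0" "xs \<longlonglongrightarrow> a" "(\<lambda>n. \<delta> (xs n)) \<longlonglongrightarrow> w"
    using graph unfolding in_closed_graph_def by blast
  have diff_mem: "ys n - xs n \<in> A0" for n
    using add_mem[OF ys(1) smul_mem[OF xs(1), of "-1"]] by (simp add: smul_minus_one)
  have "\<delta> (ys n - xs n) = \<delta> (ys n) - \<delta> (xs n)" for n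
  proof -
    have "\<delta> (ys n + smul (-1) (xs n)) = \<delta> (ys n) + smul (-1) (\<delta> (xs n))"
      using derivation ys(1) xs(1) smul_mem[OF xs(1)] unfolding qu_derivation_def by simp
    then show ?thesis by (simp add: smul_minus_one)
  qed
  then have "in_closed_graph A0 \<delta> 0 (w' - w)"
    unfolding in_closed_graph_def
    using diff_mem tendsto_diff[OF ys(2) xs(2)] tendsto_diff[OF ys(3) xs(3)]
    by (intro exI[of _ "\<lambda>n. ys n - xs n"]) simp
  then have "w' - w = 0" using \<open>closable A0 \<delta>\<close> unfolding closable_def by blast
  then show "w' = w" by simp
qed

lemma in_closed_graph_closure_op:
  assumes "qu_derivation A0 smul mul invl \<delta>" and "closable A0 \<delta>" and "a \<in> closure_dom A0 \<delta>"
  shows "in_closed_graph A0 \<delta> a (closure_op A0 \<delta> a)"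
  using assms closure_op_eqI unfolding closure_dom_def by blast

lemma tau_w_limit_exists:
  assumes "tau_w_seq_complete A0 smul mul invl"
    and conv: "\<And>\<phi> u v. \<phi> \<in> forms \<Longrightarrow> u \<in> A0 \<Longrightarrow> v \<in> A0 \<Longrightarrow>
      (\<lambda>n. \<phi> (mul (s n) u) v) \<longlonglongrightarrow> L \<phi> u v"
  shows "\<exists>d. \<forall>\<phi>\<in>forms. \<forall>u\<in>A0. \<forall>v\<in>A0. \<phi> (mul d u) v = L \<phi> u v"
proof -
  have cauchy: "\<forall>\<phi>\<in>forms. \<forall>u\<in>A0. \<forall>v\<in>A0. \<forall>e>0. \<exists>N. \<forall>m\<ge>N. \<forall>n\<ge>N.
      cmod (\<phi> (mul (s m - s n) u) v) < e"
  proof (intro ballI allI impI)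
    fix \<phi> u v and e :: real
    assume "\<phi> \<in> forms" "u \<in> A0" "v \<in> A0" "e > 0"
    then have "Cauchy (\<lambda>n. \<phi> (mul (s n) u) v)" by (blast intro: LIMSEQ_imp_Cauchy conv)
    then obtain N where "\<forall>m\<ge>N. \<forall>n\<ge>N. dist (\<phi> (mul (s m) u) v) (\<phi> (mul (s n) u) v) < e"
      using \<open>e > 0\<close> unfolding Cauchy_def by blast
    then show "\<exists>N. \<forall>m\<ge>N. \<forall>n\<ge>N. cmod (\<phi> (mul (s m - s n) u) v) < e"
      using \<open>\<phi> \<in> forms\<close> \<open>u \<in> A0\<close> by (auto simp: mul_diff_left S_forms_diff_left dist_norm)
  qed
  obtain d where d: "\<forall>\<phi>\<in>forms. \<forall>u\<in>A0. \<forall>v\<in>A0.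
      (\<lambda>n. cmod (\<phi> (mul (s n - d) u) v)) \<longlonglongrightarrow> 0"
    using assms(1)[unfolded tau_w_seq_complete_def, THEN spec[of _ s]] cauchy by blast
  have "\<phi> (mul d u) v = L \<phi> u v" if "\<phi> \<in> forms" "u \<in> A0" "v \<in> A0" for \<phi> u v
  proof -
    have "(\<lambda>n. \<phi> (mul (s n) u) v - \<phi> (mul d u) v) \<longlonglongrightarrow> 0"
      using d that by (simp add: mul_diff_left S_forms_diff_left tendsto_norm_zero_iff)
    then have "(\<lambda>n. \<phi> (mul (s n) u) v) \<longlonglongrightarrow> \<phi> (mul d u) v"
      by (simp add: LIM_zero_iff)
    then show ?thesis using conv[OF that] by (rule LIMSEQ_unique)
  qed
  then show ?thesis by blast
qed

end

locale banach_quasi_star = quasi_star +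
  assumes norm_invl: "norm (invl a) = norm a"
    and dense: "closure A0 = UNIV"
    and continuous_mul_right: "x \<in> A0 \<Longrightarrow> continuous_on UNIV (\<lambda>a. mul a x)"
begin

lemma bounded_linear_invl: "bounded_linear invl"
proof (rule bounded_linear_intro[where K=1])
  show "invl (x + y) = invl x + invl y" for x y by (rule invl_add)
  show "invl (r *\<^sub>R x) = r *\<^sub>R invl x" for r x
    by (simp add: scaleR_eq_smul invl_smul)
  show "norm (invl x) \<le> norm x * 1" for x by (simp add: norm_invl)
qed

lemma tendsto_invl: "f \<longlonglongrightarrow> l \<Longrightarrow> (\<lambda>n. invl (f n)) \<longlonglongrightarrow> invl l"
  by (rule bounded_linear.tendsto[OF bounded_linear_invl])

lemma tendsto_mul_right:
  assumes "x \<in> A0" and "f \<longlonglongrightarrow> l"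
  shows "(\<lambda>n. mul (f n) x) \<longlonglongrightarrow> mul l x"
proof -
  have "isCont (\<lambda>a. mul a x) l"
    using continuous_mul_right[OF \<open>x \<in> A0\<close>] by (simp add: continuous_on_eq_continuous_at)
  then show ?thesis using \<open>f \<longlonglongrightarrow> l\<close> by (rule isCont_tendsto_compose)
qed

lemma tendsto_mul_left: "x \<in> A0 \<Longrightarrow> f \<longlonglongrightarrow> l \<Longrightarrow> (\<lambda>n. mul x (f n)) \<longlonglongrightarrow> mul x l"
  unfolding mul_left_eq_invl by (intro tendsto_invl tendsto_mul_right invl_mem)

lemma S_forms_mul_left_adjoint:
  assumes \<phi>: "\<phi> \<in> forms" and "x \<in> A0" "v \<in> A0"
  shows "\<phi> (mul x w) v = \<phi> w (mul (invl x) v)"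
proof -
  have "w \<in> closure A0" by (simp add: dense)
  then obtain ws where ws: "\<And>n. ws n \<in> A0" "ws \<longlonglongrightarrow> w"
    unfolding closure_sequential by blast
  have bb: "bounded_bilinear \<phi>" using S_forms_bounded_bilinear[OF \<phi>] .
  have "(\<lambda>n. \<phi> (mul x (ws n)) v) \<longlonglongrightarrow> \<phi> (mul x w) v"
    using tendsto_mul_left[OF \<open>x \<in> A0\<close> ws(2)] by (intro bounded_bilinear.tendsto[OF bb]) auto
  moreover have "(\<lambda>n. \<phi> (ws n) (mul (invl x) v)) \<longlonglongrightarrow> \<phi> w (mul (invl x) v)"
    using ws(2) by (intro bounded_bilinear.tendsto[OF bb]) auto
  moreover have "\<phi> (mul x (ws n)) v = \<phi> (ws n) (mul (invl x) v)" for n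
    using S_forms_mul_adjoint[OF \<phi> ws(1) \<open>v \<in> A0\<close>] .
  ultimately show ?thesis using LIMSEQ_unique by simp
qed

lemma S_forms_derivation_mul:
  assumes "qu_derivation A0 smul mul invl \<delta>" and \<phi>: "\<phi> \<in> forms"
    and "x \<in> A0" "y \<in> A0" "u \<in> A0" "v \<in> A0"
  shows "\<phi> (mul (\<delta> (mul x y)) u) v =
    \<phi> (mul y u) (mul (invl (\<delta> x)) v) + \<phi> (mul (\<delta> y) u) (mul (invl x) v)"
proof -
  have "mul (\<delta> (mul x y)) u = mul (mul (\<delta> x) y) u + mul (mul x (\<delta> y)) u"
    using assms(1,3,4) \<open>u \<in> A0\<close> unfolding qu_derivation_def by (simp add: mul_add_left)
  also have "\<dots> = mul (\<delta> x) (mul y u) + mul x (mul (\<delta> y) u)"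
    using \<open>x \<in> A0\<close> \<open>y \<in> A0\<close> \<open>u \<in> A0\<close> by (simp add: mul_assoc_middle mul_assoc_right)
  finally show ?thesis
    using assms by (simp add: bounded_bilinear.add_left[OF S_forms_bounded_bilinear]
        S_forms_mul_adjoint S_forms_mul_left_adjoint mul_mem)
qed

lemma S_forms_derivation_mul_tendsto:
  assumes "qu_derivation A0 smul mul invl \<delta>" and \<phi>: "\<phi> \<in> forms" and "u \<in> A0" "v \<in> A0"
    and xs: "\<And>n. xs n \<in> A0" "xs \<longlonglongrightarrow> a" "(\<lambda>n. \<delta> (xs n)) \<longlonglongrightarrow> \<delta>a"
    and ys: "\<And>n. ys n \<in> A0" "ys \<longlonglongrightarrow> b" "(\<lambda>n. \<delta> (ys n)) \<longlonglongrightarrow> \<delta>b"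
  shows "(\<lambda>n. \<phi> (mul (\<delta> (mul (xs n) (ys n))) u) v)
    \<longlonglongrightarrow> \<phi> (mul b u) (mul (invl \<delta>a) v) + \<phi> (mul \<delta>b u) (mul (invl a) v)"
  unfolding S_forms_derivation_mul[OF assms(1,2) xs(1) ys(1) assms(3,4)]
  using assms by (intro tendsto_add bounded_bilinear.tendsto[OF S_forms_bounded_bilinear]
      tendsto_mul_right tendsto_invl)

end

lemma banach_quasi_star_algebra_imp_locale:
  "banach_quasi_star_algebra A0 smul mul invl \<Longrightarrow> banach_quasi_star A0 smul mul invl"
  unfolding banach_quasi_star_algebra_def banach_quasi_star_def banach_quasi_star_axioms_def quasi_star_def
  by blast

theorem proposition3p2:
  fixes A0 :: "'a::banach set"
    and smul :: "complex \<Rightarrow> 'a \<Rightarrow> 'a"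
    and mul :: "'a \<Rightarrow> 'a \<Rightarrow> 'a"
    and invl :: "'a \<Rightarrow> 'a"
    and \<delta> :: "'a \<Rightarrow> 'a"
    and a b :: 'a
  assumes "banach_quasi_star_algebra A0 smul mul invl"
    and "star_semisimple A0 smul mul invl"
    and "tau_w_seq_complete A0 smul mul invl"
    and "qu_derivation A0 smul mul invl \<delta>"
    and "closable A0 \<delta>"
    and "a \<in> closure_dom A0 \<delta>" and "b \<in> closure_dom A0 \<delta>"
    and "weak_prod_defined A0 smul mul invl a b"
  shows "\<exists>d. \<forall>\<phi>\<in>S_forms A0 smul mul invl. \<forall>u\<in>A0. \<forall>v\<in>A0.
           \<phi> (mul d u) v =
             \<phi> (mul b u) (mul (invl (closure_op A0 \<delta> a)) v)
             + \<phi> (mul (closure_op A0 \<delta> b) u) (mul (invl a) v)"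
proof -
  interpret banach_quasi_star A0 smul mul invl
    using assms(1) by (rule banach_quasi_star_algebra_imp_locale)
  obtain xs where xs: "\<And>n. xs n \<in> A0" "xs \<longlonglongrightarrow> a" "(\<lambda>n. \<delta> (xs n)) \<longlonglongrightarrow> closure_op A0 \<delta> a"
    using in_closed_graph_closure_op[OF assms(4,5,6)] unfolding in_closed_graph_def by blast
  obtain ys where ys: "\<And>n. ys n \<in> A0" "ys \<longlonglongrightarrow> b" "(\<lambda>n. \<delta> (ys n)) \<longlonglongrightarrow> closure_op A0 \<delta> b"
    using in_closed_graph_closure_op[OF assms(4,5,7)] unfolding in_closed_graph_def by blast
  show ?thesis
  proof (rule tau_w_limit_exists[OF assms(3), where s = "\<lambda>n. \<delta> (mul (xs n) (ys n))"])
    fix \<phi> u v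
    assume "\<phi> \<in> forms" "u \<in> A0" "v \<in> A0"
    then show "(\<lambda>n. \<phi> (mul (\<delta> (mul (xs n) (ys n))) u) v)
      \<longlonglongrightarrow> \<phi> (mul b u) (mul (invl (closure_op A0 \<delta> a)) v)
        + \<phi> (mul (closure_op A0 \<delta> b) u) (mul (invl a) v)"
      by (rule S_forms_derivation_mul_tendsto[OF assms(4) _ _ _ xs ys])
  qed
qed

end
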